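(* Let $x_0\in\mathbb{R}^2$, $r_0>0$, and let $E$ be a relatively closed subset of $B(x_0,r_0)$ such that $x_0\in E$ and $E$ separates $B(x_0,r_0)$. Assume there exists a constant $C_0\ge1$ such that $\mathcal{H}^1(E\cap B(x,r))\ge C_0^{-1}r$ for all $x\in E$ and $r>0$ with $B(x,r)\subset B(x_0,r_0)$. Suppose also that $\overline{E}\cap\partial B(x_0,r_0)$ consists of exactly two points $p$ and $q$ with $|p-q|\ge r_0$. Then $$\beta_E(x_0,r_0/2)^2\le64C_0r_0^{-1}\big(\mathcal{H}^1(E)-|p-q|\big).$$
   Context: $B(x,r)$ is the open ball. $\beta_E(x,r)=r^{-1}\inf_\ell\sup_{y\in E\cap B(x,r)}\mathrm{dist}(y,\ell)$, infimum over lines through $x$ (attained); with $\nu$ a unit normal of a minimizing line and $D^\pm_t=\{z\in B(x_0,r_0):\pm(z-x_0)\cdot\nu>t\}$, $E$ separates $B(x_0,r_0)$ if $\beta:=\beta_E(x_0,r_0)\le1/2$ and $D^+_{\beta r_0}$, $D^-_{\beta r_0}$ lie in distinct connected components of $B(x_0,r_0)\setminus E$. *)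

theory Defs
  imports "HOL-Analysis.Analysis"
begin

type_synonym R2 = "real ^ 2"

definition hausdorff_pre1 :: "real \<Rightarrow> 'a::metric_space set \<Rightarrow> ennreal" where
  "hausdorff_pre1 \<delta> A =
     (INF U \<in> {U :: nat \<Rightarrow> 'a set. A \<subseteq> (\<Union>i. U i) \<and>
                 (\<forall>i. bounded (U i) \<and> diameter (U i) \<le> \<delta>)}.
        (\<Sum>i. ennreal (diameter (U i))))"

definition H1 :: "'a::metric_space set \<Rightarrow> ennreal" where
  "H1 A = (SUP \<delta> \<in> {0<..}. hausdorff_pre1 \<delta> A)"

definition line_normal :: "R2 \<Rightarrow> R2 \<Rightarrow> R2 set" where
  "line_normal x \<nu> = {z. inner (z - x) \<nu> = 0}"

definition width :: "R2 set \<Rightarrow> R2 \<Rightarrow> real \<Rightarrow> R2 \<Rightarrow> real" where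
  "width E x r \<nu> = Sup (insert 0 ((\<lambda>y. infdist y (line_normal x \<nu>)) ` (E \<inter> ball x r)))"

definition beta :: "R2 set \<Rightarrow> R2 \<Rightarrow> real \<Rightarrow> real" where
  "beta E x r = (INF \<nu> \<in> {\<nu>. norm \<nu> = 1}. width E x r \<nu>) / r"

definition halfdisc :: "R2 \<Rightarrow> real \<Rightarrow> R2 \<Rightarrow> real \<Rightarrow> R2 set" where
  "halfdisc x r \<nu> t = {z \<in> ball x r. inner (z - x) \<nu> > t}"

definition separates :: "R2 set \<Rightarrow> R2 \<Rightarrow> real \<Rightarrow> bool" where
  "separates E x r \<longleftrightarrow> beta E x r \<le> 1/2 \<and>
     (\<exists>\<nu>. norm \<nu> = 1 \<and> width E x r \<nu> = r * beta E x r \<and>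
        (\<exists>C1 \<in> components (ball x r - E). \<exists>C2 \<in> components (ball x r - E).
           C1 \<noteq> C2 \<and> halfdisc x r \<nu> (beta E x r * r) \<subseteq> C1 \<and>
           halfdisc x r (- \<nu>) (beta E x r * r) \<subseteq> C2))"

end

theory Submission
  imports Defs
begin

text \<open>Because E separates the disc and meets its boundary circle only at p and q, the
  arcs of that circle on the two sides of the chord pq are adjacent to different components of
  the complement of E. Every circle about p of radius t < |p - q| runs inside the disc from one
  arc to the other, so it meets E; hence E has length at least r in any ball of radius
  r < |p - q| about p, and likewise about q. If \<beta> = \<beta>_E(x0, r0/2) is large, some
  w \<in> E \<inter> B(x0, r0/2) lies at height h \<ge> 9\<beta>r0/40 above the line pq, so the detour
  |p - w| + |w - q| - |p - q| is at least 2 h^2 / (3 r0). Balls about p and q of total radius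
  almost |p - q| and a ball about w of radius comparable to this detour are then disjoint,
  and the lower density bound for the last one gives the excess of H1(E) over |p - q|.\<close>

section \<open>One-dimensional Hausdorff measure\<close>

lemma hausdorff_pre1_mono:
  assumes "A \<subseteq> B" shows "hausdorff_pre1 \<delta> A \<le> hausdorff_pre1 \<delta> B"
  unfolding hausdorff_pre1_def by (rule INF_superset_mono) (use assms in auto)

lemma hausdorff_pre1_antimono:
  assumes "\<delta> \<le> \<delta>'" shows "hausdorff_pre1 \<delta>' A \<le> hausdorff_pre1 \<delta> A"
  unfolding hausdorff_pre1_def by (rule INF_superset_mono) (auto intro: order_trans[OF _ assms])

lemma hausdorff_pre1_le_H1:
  assumes "\<delta> > 0" shows "hausdorff_pre1 \<delta> A \<le> H1 A"
  unfolding H1_def by (rule SUP_upper) (use assms in auto)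

lemma H1_mono:
  assumes "A \<subseteq> B" shows "H1 A \<le> H1 B"
  unfolding H1_def by (intro SUP_mono) (use hausdorff_pre1_mono[OF assms] in blast)

text \<open>Each covering set U is mapped by f into an interval of length at most diameter U;
  these intervals cover the open interval, whose Lebesgue measure is b - a.\<close>
lemma hausdorff_pre1_ge_interval:
  fixes f :: "'a::metric_space \<Rightarrow> real"
  assumes f: "1-lipschitz_on UNIV f" and cover: "{a<..<b} \<subseteq> f ` A"
  shows "ennreal (b - a) \<le> hausdorff_pre1 \<delta> A"
  unfolding hausdorff_pre1_def
proof (rule INF_greatest, clarify)
  fix U :: "nat \<Rightarrow> 'a set"
  assume AU: "A \<subseteq> (\<Union>i. U i)" and bd: "\<forall>i. bounded (U i) \<and> diameter (U i) \<le> \<delta>"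
  define J where "J i = {Inf (f ` U i) .. Inf (f ` U i) + diameter (U i)}" for i
  have fJ: "f ` U i \<subseteq> J i" for i
  proof
    fix t assume "t \<in> f ` U i"
    then obtain x where x: "x \<in> U i" "t = f x" by auto
    have close: "\<bar>f x - f y\<bar> \<le> diameter (U i)" if "x \<in> U i" "y \<in> U i" for x y
      using lipschitz_onD[OF f, of x y] diameter_bounded_bound[of "U i" x y] bd that
      by (simp add: dist_real_def)
    have "bdd_below (f ` U i)"
      by (rule bdd_belowI[of _ "f x - diameter (U i)"]) (use close x in force)
    then have "Inf (f ` U i) \<le> t" using x by (simp add: cInf_lower)
    moreover have "f x - diameter (U i) \<le> Inf (f ` U i)"
      by (rule cInf_greatest) (use close x in force)+
    ultimately show "t \<in> J i" using x by (simp add: J_def)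
  qed
  have "{a<..<b} \<subseteq> (\<Union>i. J i)"
  proof
    fix t assume "t \<in> {a<..<b}"
    then obtain z where "z \<in> A" "t = f z" using cover by auto
    then obtain i where "z \<in> U i" "t = f z" using AU by auto
    then show "t \<in> (\<Union>i. J i)" using fJ by blast
  qed
  then have "emeasure lborel {a<..<b} \<le> emeasure lborel (\<Union>i. J i)"
    by (intro emeasure_mono) (auto simp: J_def)
  also have "\<dots> \<le> (\<Sum>i. emeasure lborel (J i))"
    by (rule emeasure_subadditive_countably) (auto simp: J_def)
  also have "\<dots> \<le> (\<Sum>i. ennreal (diameter (U i)))"
    using bd by (intro suminf_le) (auto simp: J_def diameter_ge_0)
  finally show "ennreal (b - a) \<le> (\<Sum>i. ennreal (diameter (U i)))"
    by (cases "a \<le> b") (simp_all add: ennreal_neg)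
qed

lemma H1_ge_interval:
  fixes f :: "'a::metric_space \<Rightarrow> real"
  assumes "1-lipschitz_on UNIV f" "{a<..<b} \<subseteq> f ` A"
  shows "ennreal (b - a) \<le> H1 A"
  by (rule order_trans[OF hausdorff_pre1_ge_interval[OF assms] hausdorff_pre1_le_H1[of 1]]) simp

lemma H1_ge_radius:
  fixes E :: "'a::metric_space set"
  assumes "\<And>t. 0 < t \<Longrightarrow> t < r \<Longrightarrow> \<exists>z\<in>E. dist p z = t"
  shows "ennreal r \<le> H1 (E \<inter> ball p r)"
proof -
  have "1-lipschitz_on UNIV (dist p)"
    by (rule lipschitz_onI) (use abs_dist_diff_le[of _ p] in \<open>auto simp: dist_real_def dist_commute\<close>)
  moreover have "{0<..<r} \<subseteq> dist p ` (E \<inter> ball p r)" using assms by force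
  ultimately show ?thesis using H1_ge_interval[of "dist p" 0 r] by simp
qed

text \<open>A covering set of diameter at most \<delta> cannot meet both A and B, so a cover of
  A \<union> B splits into a cover of A and a cover of B.\<close>
lemma hausdorff_pre1_union_separated:
  assumes \<delta>: "\<delta> \<ge> 0" and sep: "\<And>x y. x \<in> A \<Longrightarrow> y \<in> B \<Longrightarrow> \<delta> < dist x y"
  shows "hausdorff_pre1 \<delta> A + hausdorff_pre1 \<delta> B \<le> hausdorff_pre1 \<delta> (A \<union> B :: 'a::metric_space set)"
  unfolding hausdorff_pre1_def[of \<delta> "A \<union> B"]
proof (rule INF_greatest, clarify)
  fix U :: "nat \<Rightarrow> 'a set"
  assume AU: "A \<union> B \<subseteq> (\<Union>i. U i)" and bd: "\<forall>i. bounded (U i) \<and> diameter (U i) \<le> \<delta>"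
  define V where "V R i = (if U i \<inter> R = {} then {} else U i)" for R i
  have cover: "hausdorff_pre1 \<delta> R \<le> (\<Sum>i. ennreal (diameter (V R i)))" if R: "R \<subseteq> A \<union> B" for R
    unfolding hausdorff_pre1_def
  proof (rule INF_lower, safe)
    fix x assume "x \<in> R"
    then obtain i where "x \<in> U i" using AU R by blast
    with \<open>x \<in> R\<close> show "x \<in> (\<Union>i. V R i)" by (auto simp: V_def)
  qed (use bd \<delta> in \<open>auto simp: V_def\<close>)
  have disj: "U i \<inter> A = {} \<or> U i \<inter> B = {}" for i
  proof (rule ccontr)
    assume "\<not> ?thesis"
    then obtain x y where "x \<in> U i" "x \<in> A" "y \<in> U i" "y \<in> B" by auto
    with diameter_bounded_bound[of "U i" x y] bd sep[of x y] show False
      by (meson not_le order_trans)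
  qed
  have split: "ennreal (diameter (V A i)) + ennreal (diameter (V B i)) \<le> ennreal (diameter (U i))" for i
    using disj[of i] by (auto simp: V_def)
  have "hausdorff_pre1 \<delta> A + hausdorff_pre1 \<delta> B
      \<le> (\<Sum>i. ennreal (diameter (V A i))) + (\<Sum>i. ennreal (diameter (V B i)))"
    by (intro add_mono cover) auto
  also have "\<dots> = (\<Sum>i. ennreal (diameter (V A i)) + ennreal (diameter (V B i)))"
    by (simp add: suminf_add)
  also have "\<dots> \<le> (\<Sum>i. ennreal (diameter (U i)))"
    by (intro suminf_le split) auto
  finally show "hausdorff_pre1 \<delta> A + hausdorff_pre1 \<delta> B \<le> (\<Sum>i. ennreal (diameter (U i)))" .
qed

lemma H1_union_separated:
  assumes g: "g > 0" and sep: "\<And>x y. x \<in> A \<Longrightarrow> y \<in> B \<Longrightarrow> g \<le> dist x y"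
  shows "H1 A + H1 B \<le> H1 (A \<union> B :: 'a::metric_space set)"
proof -
  have "H1 A + H1 B = (SUP \<delta>\<in>{0<..}. hausdorff_pre1 \<delta> A + H1 B)"
    unfolding H1_def by (rule ennreal_SUP_add_left[symmetric]) auto
  also have "\<dots> = (SUP \<delta>\<in>{0<..}. SUP \<delta>'\<in>{0<..}. hausdorff_pre1 \<delta> A + hausdorff_pre1 \<delta>' B)"
    unfolding H1_def by (simp add: ennreal_SUP_add_right)
  also have "\<dots> \<le> H1 (A \<union> B)"
  proof (intro SUP_least)
    fix \<delta> \<delta>' :: real assume "\<delta> \<in> {0<..}" "\<delta>' \<in> {0<..}"
    define d where "d = min (min \<delta> \<delta>') (g/2)"
    have d: "0 < d" "d \<le> \<delta>" "d \<le> \<delta>'" "d < g" using \<open>\<delta> \<in> _\<close> \<open>\<delta>' \<in> _\<close> g by (auto simp: d_def)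
    have "hausdorff_pre1 \<delta> A + hausdorff_pre1 \<delta>' B \<le> hausdorff_pre1 d A + hausdorff_pre1 d B"
      by (intro add_mono hausdorff_pre1_antimono d)
    also have "\<dots> \<le> hausdorff_pre1 d (A \<union> B)"
      by (rule hausdorff_pre1_union_separated) (use d sep in \<open>auto intro: less_le_trans\<close>)
    also have "\<dots> \<le> H1 (A \<union> B)" by (rule hausdorff_pre1_le_H1) fact
    finally show "hausdorff_pre1 \<delta> A + hausdorff_pre1 \<delta>' B \<le> H1 (A \<union> B)" .
  qed
  finally show ?thesis .
qed

lemma H1_three_separated_balls:
  fixes E :: "'a::metric_space set"
  assumes g: "g > 0"
    and "r1 + r2 + g \<le> dist a b" "r1 + r3 + g \<le> dist a c" "r2 + r3 + g \<le> dist b c"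
  shows "H1 (E \<inter> ball a r1) + H1 (E \<inter> ball b r2) + H1 (E \<inter> ball c r3) \<le> H1 E"
proof -
  have sep: "g \<le> dist x y" if "x \<in> ball a' ra" "y \<in> ball b' rb" "ra + rb + g \<le> dist a' b'"
    for x y a' b' ra rb
    using that dist_triangle[of a' b' x] dist_triangle[of x b' y] by (simp add: dist_commute)
  let ?A = "E \<inter> ball a r1" and ?B = "E \<inter> ball b r2" and ?C = "E \<inter> ball c r3"
  have "g \<le> dist x y" if "x \<in> ?A \<union> ?B" "y \<in> ?C" for x y
    using that sep[of x a r1 y c r3] sep[of x b r2 y c r3] assms(3,4) by auto
  moreover have "g \<le> dist x y" if "x \<in> ?A" "y \<in> ?B" for x y
    using that sep[of x a r1 y b r2] assms(2) by auto
  ultimately have "H1 ?A + H1 ?B + H1 ?C \<le> H1 (?A \<union> ?B) + H1 ?C"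
    and "H1 (?A \<union> ?B) + H1 ?C \<le> H1 (?A \<union> ?B \<union> ?C)"
    by (intro add_right_mono H1_union_separated[OF g], blast)+
  then have "H1 ?A + H1 ?B + H1 ?C \<le> H1 (?A \<union> ?B \<union> ?C)" by (rule order_trans)
  also have "\<dots> \<le> H1 E" by (rule H1_mono) blast
  finally show ?thesis .
qed

section \<open>Components adjacent to boundary points\<close>

text \<open>Used for z on the boundary of \<Omega> and U = \<Omega> - E: K is the component of \<Omega> - E
  adjacent to z.\<close>
definition component_at :: "'a::metric_space set \<Rightarrow> 'a set \<Rightarrow> 'a \<Rightarrow> 'a set \<Rightarrow> bool" where
  "component_at \<Omega> U z K \<longleftrightarrow> K \<in> components U \<and> (\<exists>e>0. ball z e \<inter> \<Omega> \<subseteq> K)"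

lemma component_at_unique:
  assumes z: "z \<in> closure \<Omega>" and K: "component_at \<Omega> U z K" and K': "component_at \<Omega> U z K'"
  shows "K = K'"
proof -
  obtain e e' where e: "e > 0" "ball z e \<inter> \<Omega> \<subseteq> K" and e': "e' > 0" "ball z e' \<inter> \<Omega> \<subseteq> K'"
    using K K' by (auto simp: component_at_def)
  obtain y where "y \<in> \<Omega>" "dist z y < min e e'"
    using closure_approachableD[OF z] e(1) e'(1) by (metis min_less_iff_conj)
  then have "y \<in> K \<inter> K'" using e(2) e'(2) by auto
  then show ?thesis using K K' components_eq by (auto simp: component_at_def)
qed

lemma component_at_exists:
  fixes \<Omega> :: "'a::real_normed_vector set"
  assumes "convex \<Omega>" and z: "z \<in> closure \<Omega>" "z \<notin> closure E"
  shows "\<exists>K. component_at \<Omega> (\<Omega> - E) z K"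
proof -
  obtain e where e: "e > 0" "ball z e \<subseteq> - closure E"
    using z(2) openE[of "- closure E" z] by blast
  define N where "N = ball z e \<inter> \<Omega>"
  have "N \<noteq> {}" using closure_approachableD[OF z(1) e(1)] by (auto simp: N_def)
  moreover have "connected N"
    unfolding N_def by (intro convex_connected convex_Int convex_ball) fact
  moreover have "N \<subseteq> \<Omega> - E" using e(2) closure_subset by (force simp: N_def)
  ultimately obtain K where "K \<in> components (\<Omega> - E)" "N \<subseteq> K"
    using exists_component_superset by blast
  then show ?thesis using e(1) by (auto simp: component_at_def N_def)
qed

lemma component_at_eventually:
  assumes "component_at \<Omega> U z K"
  shows "\<exists>e>0. \<forall>z'\<in>ball z e. component_at \<Omega> U z' K"
proof -
  obtain e where e: "e > 0" "ball z e \<inter> \<Omega> \<subseteq> K"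
    using assms by (auto simp: component_at_def)
  have "ball z' (e/2) \<inter> \<Omega> \<subseteq> K" if "z' \<in> ball z (e/2)" for z'
  proof -
    have "ball z' (e/2) \<subseteq> ball z e"
    proof
      fix x assume "x \<in> ball z' (e/2)"
      then show "x \<in> ball z e" using that dist_triangle[of z x z'] by simp
    qed
    then show ?thesis using e(2) by blast
  qed
  moreover have "K \<in> components U" using assms by (simp add: component_at_def)
  ultimately show ?thesis using e(1) half_gt_zero unfolding component_at_def by blast
qed

lemma component_at_connected:
  assumes T: "connected T" "T \<subseteq> closure \<Omega>" and ex: "\<And>z. z \<in> T \<Longrightarrow> \<exists>K. component_at \<Omega> U z K"
  shows "\<exists>K. \<forall>z\<in>T. component_at \<Omega> U z K"
proof (cases "T = {}")
  case False
  then obtain a K where a: "a \<in> T" "component_at \<Omega> U a K" using ex by blast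
  have "component_at \<Omega> U b K" if b: "b \<in> T" for b
  proof (rule connected_induction_simple[OF T(1) a(1) b, where P = "\<lambda>z. component_at \<Omega> U z K"])
    fix c assume "c \<in> T"
    then obtain Kc where "component_at \<Omega> U c Kc" using ex by blast
    then obtain e where e: "e > 0" "\<And>z'. z' \<in> ball c e \<Longrightarrow> component_at \<Omega> U z' Kc"
      using component_at_eventually by blast
    have "\<forall>x\<in>T \<inter> ball c e. \<forall>y\<in>T \<inter> ball c e. component_at \<Omega> U x K \<longrightarrow> component_at \<Omega> U y K"
      using e(2) T(2) component_at_unique by blast
    then show "\<exists>T'. openin (top_of_set T) T' \<and> c \<in> T' \<and>
        (\<forall>x\<in>T'. \<forall>y\<in>T'. component_at \<Omega> U x K \<longrightarrow> component_at \<Omega> U y K)"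
      using \<open>c \<in> T\<close> e(1) by (intro exI[of _ "T \<inter> ball c e"]) auto
  qed (fact a(2))
  then show ?thesis by blast
qed simp

lemma component_at_eq_component:
  assumes K: "component_at \<Omega> U z K" and C: "C \<in> components U" and "U \<subseteq> \<Omega>" and z: "z \<in> closure C"
  shows "K = C"
proof -
  obtain e where e: "e > 0" "ball z e \<inter> \<Omega> \<subseteq> K" using K by (auto simp: component_at_def)
  obtain y where "y \<in> C" "dist z y < e" using closure_approachableD[OF z e(1)] by blast
  moreover have "C \<subseteq> \<Omega>" using C \<open>U \<subseteq> \<Omega>\<close> in_components_subset by blast
  ultimately have "y \<in> K \<inter> C" using e(2) by auto
  then show ?thesis using K C components_eq by (auto simp: component_at_def)
qed

lemma component_at_closure_connected:
  assumes "U \<subseteq> \<Omega>" and F: "connected F" "F \<subseteq> U" and z: "z \<in> closure F" "z' \<in> closure F"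
    and K: "component_at \<Omega> U z K" and K': "component_at \<Omega> U z' K'"
  shows "K = K'"
proof -
  have "F \<noteq> {}" using z(1) by auto
  then obtain C where C: "C \<in> components U" "F \<subseteq> C" using exists_component_superset F by blast
  have "z \<in> closure C" "z' \<in> closure C" using z closure_mono[OF C(2)] by auto
  then show ?thesis
    using component_at_eq_component[OF K C(1) \<open>U \<subseteq> \<Omega>\<close>] component_at_eq_component[OF K' C(1) \<open>U \<subseteq> \<Omega>\<close>]
    by simp
qed

section \<open>Spheres, secants and rays\<close>

lemma norm_add_squared:
  fixes a b :: "'a::real_inner"
  shows "(norm (a + b))\<^sup>2 = (norm a)\<^sup>2 + 2 * inner a b + (norm b)\<^sup>2"
  unfolding power2_norm_eq_inner by (simp add: inner_add_left inner_add_right inner_commute)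

lemma norm_diff_squared:
  fixes a b :: "'a::real_inner"
  shows "(norm (a - b))\<^sup>2 = (norm a)\<^sup>2 - 2 * inner a b + (norm b)\<^sup>2"
  using norm_add_squared[of a "- b"] by simp

lemma sphere_secant_param:
  fixes p q x0 :: "'a::real_inner"
  assumes "p \<in> sphere x0 r" "q \<in> sphere x0 r" "p \<noteq> q" "p + k *\<^sub>R (q - p) \<in> sphere x0 r"
  shows "k = 0 \<or> k = 1"
proof -
  define A Q where "A = inner (p - x0) (q - p)" and "Q = (norm (q - p))\<^sup>2"
  have sq: "(dist x0 (p + s *\<^sub>R (q - p)))\<^sup>2 = r\<^sup>2 + 2 * s * A + s\<^sup>2 * Q" for s
  proof -
    have "dist x0 (p + s *\<^sub>R (q - p)) = norm (p - x0 + s *\<^sub>R (q - p))"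
      by (metis dist_commute dist_norm diff_add_eq)
    then show ?thesis using assms(1) norm_add_squared[of "p - x0" "s *\<^sub>R (q - p)"]
      by (simp add: A_def Q_def dist_norm norm_minus_commute power_mult_distrib)
  qed
  have "2 * A = - Q" using sq[of 1] assms(2) by simp
  moreover have "2 * k * A + k\<^sup>2 * Q = 0" using sq[of k] assms(4) by simp
  moreover have "k * (k - 1) * Q = (2 * k * A + k\<^sup>2 * Q) - k * (2 * A + Q)"
    by (simp add: algebra_simps power2_eq_square)
  ultimately have "k * (k - 1) * Q = 0" by simp
  then show ?thesis using assms(3) by (simp add: Q_def)
qed

lemma dist_ray_eq_iff:
  fixes m v x :: "'a::real_inner"
  assumes "r \<ge> 0"
  shows "dist x (m + s *\<^sub>R v) = r \<longleftrightarrow>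
    inner v v * s\<^sup>2 + 2 * inner (m - x) v * s = r\<^sup>2 - (dist m x)\<^sup>2"
proof -
  have "dist x (m + s *\<^sub>R v) = norm (m - x + s *\<^sub>R v)"
    by (metis dist_commute dist_norm diff_add_eq)
  then have "(dist x (m + s *\<^sub>R v))\<^sup>2 = (dist m x)\<^sup>2 + (inner v v * s\<^sup>2 + 2 * inner (m - x) v * s)"
    using norm_add_squared[of "m - x" "s *\<^sub>R v"]
    by (simp add: dist_norm algebra_simps power_mult_distrib power2_norm_eq_inner)
  moreover have "dist x (m + s *\<^sub>R v) = r \<longleftrightarrow> (dist x (m + s *\<^sub>R v))\<^sup>2 = r\<^sup>2"
    using assms by simp
  ultimately show ?thesis by (intro iffI; linarith)
qed

text \<open>The positive root of the quadratic in s from dist_ray_eq_iff: the parameter at which the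
  ray from m in direction v leaves the ball.\<close>
definition sphere_exit :: "'a::real_inner \<Rightarrow> real \<Rightarrow> 'a \<Rightarrow> 'a \<Rightarrow> real" where
  "sphere_exit x0 r m v =
     (sqrt ((inner (m - x0) v)\<^sup>2 + inner v v * (r\<^sup>2 - (dist m x0)\<^sup>2)) - inner (m - x0) v) / inner v v"

lemma sphere_exit_on_sphere:
  fixes m v x0 :: "'a::real_inner"
  assumes m: "m \<in> ball x0 r" and "v \<noteq> 0"
  shows "sphere_exit x0 r m v > 0" "m + sphere_exit x0 r m v *\<^sub>R v \<in> sphere x0 r"
proof -
  define b N c where "b = inner (m - x0) v" and "N = inner v v" and "c = r\<^sup>2 - (dist m x0)\<^sup>2"
  define t where "t = sphere_exit x0 r m v"
  have N: "N > 0" using \<open>v \<noteq> 0\<close> by (simp add: N_def)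
  have "dist m x0 < r" using m by (simp add: dist_commute)
  then have c: "c > 0" using zero_le_dist[of m x0] by (simp add: c_def power_strict_mono)
  define s where "s = sqrt (b\<^sup>2 + N * c)"
  have s2: "s\<^sup>2 = b\<^sup>2 + N * c" using N c by (simp add: s_def)
  have "\<bar>b\<bar> < s" using N c by (simp add: s_def real_less_rsqrt)
  then show "sphere_exit x0 r m v > 0" using N by (simp add: sphere_exit_def s_def b_def N_def c_def)
  have "N * t + b = s" using N by (simp add: t_def sphere_exit_def s_def b_def N_def c_def)
  have "N * (N * t\<^sup>2 + 2 * b * t) = (N * t + b)\<^sup>2 - b\<^sup>2"
    by (simp add: algebra_simps power2_eq_square)
  also have "\<dots> = N * c" using s2 \<open>N * t + b = s\<close> by simp
  finally have "N * t\<^sup>2 + 2 * b * t = c" using N by simp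
  moreover have "0 \<le> r" using \<open>dist m x0 < r\<close> zero_le_dist[of m x0] by linarith
  ultimately show "m + sphere_exit x0 r m v *\<^sub>R v \<in> sphere x0 r"
    using dist_ray_eq_iff[where s = t and r = r and m = m and v = v and x = x0]
    by (simp add: t_def b_def N_def c_def)
qed

text \<open>The quadratic has a negative constant term, so its roots have opposite signs.\<close>
lemma sphere_exit_unique:
  fixes m v x0 :: "'a::real_inner"
  assumes m: "m \<in> ball x0 r" and s: "s > 0" "m + s *\<^sub>R v \<in> sphere x0 r"
  shows "s = sphere_exit x0 r m v"
proof (rule ccontr)
  assume "s \<noteq> sphere_exit x0 r m v"
  define t b N c where "t = sphere_exit x0 r m v" and "b = inner (m - x0) v" and "N = inner v v"
    and "c = r\<^sup>2 - (dist m x0)\<^sup>2"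
  have "r \<ge> 0" using m by (metis mem_ball zero_le_dist less_imp_le le_less_trans)
  have "v \<noteq> 0" using m s(2) by auto
  then have t: "t > 0" "m + t *\<^sub>R v \<in> sphere x0 r" using sphere_exit_on_sphere[OF m] by (simp_all add: t_def)
  have qs: "N * s\<^sup>2 + 2 * b * s = c" and qt: "N * t\<^sup>2 + 2 * b * t = c"
    using dist_ray_eq_iff[OF \<open>r \<ge> 0\<close>, where m = m and v = v and x = x0] s(2) t(2)
    by (simp_all add: b_def N_def c_def)
  then have "(s - t) * (N * (s + t) + 2 * b) = 0" by (simp add: algebra_simps power2_eq_square)
  then have b: "2 * b = - N * (s + t)" using \<open>s \<noteq> sphere_exit x0 r m v\<close> by (simp add: t_def)
  have "c = N * s\<^sup>2 + (2 * b) * s" using qs by simp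
  also have "\<dots> = - N * s * t" unfolding b by (simp add: algebra_simps power2_eq_square)
  finally have "c = - N * s * t" .
  moreover have "N * s * t > 0" using \<open>v \<noteq> 0\<close> s(1) t(1) by (simp add: N_def)
  moreover have "dist m x0 < r" using m by (simp add: dist_commute)
  then have "c > 0" using zero_le_dist[of m x0] by (simp add: c_def power_strict_mono)
  ultimately show False by linarith
qed

lemma connected_sphere_half:
  fixes m x0 n :: "'a::real_inner"
  assumes m: "m \<in> ball x0 r"
  shows "connected {z \<in> sphere x0 r. inner (z - m) n > 0}"
proof -
  define H where "H = {v. inner v n > 0}"
  have nz: "v \<noteq> 0" if "v \<in> H" for v using that by (auto simp: H_def)
  have "connected ((\<lambda>v. m + sphere_exit x0 r m v *\<^sub>R v) ` H)"
  proof (rule connected_continuous_image)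
    show "continuous_on H (\<lambda>v. m + sphere_exit x0 r m v *\<^sub>R v)"
      unfolding sphere_exit_def by (intro continuous_intros) (auto dest: nz)
    show "connected H"
      unfolding H_def using convex_halfspace_gt[of 0 n] by (intro convex_connected) (simp add: inner_commute)
  qed
  moreover have "(\<lambda>v. m + sphere_exit x0 r m v *\<^sub>R v) ` H = {z \<in> sphere x0 r. inner (z - m) n > 0}"
  proof (intro equalityI subsetI)
    fix z assume "z \<in> (\<lambda>v. m + sphere_exit x0 r m v *\<^sub>R v) ` H"
    then show "z \<in> {z \<in> sphere x0 r. inner (z - m) n > 0}"
      using sphere_exit_on_sphere[OF m nz] by (auto simp: H_def)
  next
    fix z assume z: "z \<in> {z \<in> sphere x0 r. inner (z - m) n > 0}"
    then have "z - m \<in> H" "m + 1 *\<^sub>R (z - m) \<in> sphere x0 r" by (simp_all add: H_def)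
    moreover from this have "sphere_exit x0 r m (z - m) = 1"
      using sphere_exit_unique[OF m zero_less_one] by simp
    ultimately show "z \<in> (\<lambda>v. m + sphere_exit x0 r m v *\<^sub>R v) ` H"
      by (auto intro!: image_eqI[of _ _ "z - m"])
  qed
  ultimately show ?thesis by simp
qed

text \<open>Reflect w in the line pq to w'. Then dist q w' = dist q w, and
  (w - p) + (q - w') = (q - p) + 2 s n with s the signed height of w, a vector whose length
  is the left-hand side.\<close>
lemma chord_height_le_dist_sum:
  fixes p q w n :: "'a::real_inner"
  assumes n: "norm n = 1" and pq: "inner (q - p) n = 0"
  shows "sqrt ((dist p q)\<^sup>2 + 4 * (inner (w - p) n)\<^sup>2) \<le> dist p w + dist q w"
proof -
  define s where "s = inner (w - p) n"
  define w' where "w' = w - (2 * s) *\<^sub>R n"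
  have qw: "inner (q - w) n = - s" using pq by (simp add: s_def inner_diff_left)
  have shift: "(norm (x + (2 * s) *\<^sub>R n))\<^sup>2 = (norm x)\<^sup>2 + 4 * s * inner x n + 4 * s\<^sup>2" for x
    using norm_add_squared[of x "(2 * s) *\<^sub>R n"] n by (simp add: power_mult_distrib algebra_simps)
  have reflect: "q - w' = (q - w) + (2 * s) *\<^sub>R n" by (simp add: w'_def algebra_simps)
  have "(norm (q - w'))\<^sup>2 = (norm (q - w))\<^sup>2" unfolding reflect shift qw by (simp add: power2_eq_square)
  then have qw': "norm (q - w') = dist q w" by (simp add: dist_norm)
  have chord: "(w - p) + (q - w') = (q - p) + (2 * s) *\<^sub>R n" by (simp add: w'_def algebra_simps)
  have "(norm ((w - p) + (q - w')))\<^sup>2 = (dist p q)\<^sup>2 + 4 * s\<^sup>2"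
    unfolding chord shift pq by (simp add: dist_norm norm_minus_commute[of q p])
  then have "sqrt ((dist p q)\<^sup>2 + 4 * s\<^sup>2) = norm ((w - p) + (q - w'))"
    by (rule real_sqrt_unique) simp
  also have "\<dots> \<le> norm (w - p) + norm (q - w')" by (rule norm_triangle_ineq)
  finally show ?thesis using qw' by (simp add: s_def dist_norm norm_minus_commute)
qed

lemma chord_plus_excess_le_sqrt:
  assumes r: "r > 0" and L: "0 \<le> L" "L \<le> 2 * r" and h: "\<bar>h\<bar> \<le> 3/2 * r"
  shows "L + 2 * h\<^sup>2 / (3 * r) \<le> sqrt (L\<^sup>2 + 4 * h\<^sup>2)"
proof (rule real_le_rsqrt)
  define k where "k = 2 * h\<^sup>2 / (3 * r)"
  have k: "0 \<le> k" "k \<le> \<bar>h\<bar>"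
  proof -
    have "2 * \<bar>h\<bar> / (3 * r) \<le> 1" using r h by (simp add: field_simps)
    then have "\<bar>h\<bar> * (2 * \<bar>h\<bar> / (3 * r)) \<le> \<bar>h\<bar>" by (rule mult_left_le) simp
    moreover have "k = \<bar>h\<bar> * (2 * \<bar>h\<bar> / (3 * r))" by (simp add: k_def power2_eq_square abs_mult_self_eq)
    ultimately show "0 \<le> k" "k \<le> \<bar>h\<bar>" using r by (auto simp: k_def)
  qed
  have "2 * L * k \<le> 2 * (2 * r) * k" using L k by (intro mult_right_mono) auto
  moreover have "2 * (2 * r) * k = 8/3 * h\<^sup>2" using r by (simp add: k_def)
  moreover have "k\<^sup>2 \<le> h\<^sup>2" using k power_mono[of k "\<bar>h\<bar>" 2] by simp
  moreover have "(L + k)\<^sup>2 = L\<^sup>2 + 2 * L * k + k\<^sup>2" by (simp add: power2_eq_square algebra_simps)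
  moreover have "0 \<le> h\<^sup>2" by simp
  ultimately show "(L + k)\<^sup>2 \<le> L\<^sup>2 + 4 * h\<^sup>2" by linarith
qed

lemma chord_plus_height_sq_le_dist_sum:
  fixes x0 p q w n :: "'a::real_inner"
  assumes pq: "dist x0 p = r" "dist x0 q = r" and w: "dist x0 w < r / 2"
    and n: "norm n = 1" "inner (q - p) n = 0"
  shows "dist p q + 2 * (inner (w - p) n)\<^sup>2 / (3 * r) \<le> dist p w + dist q w"
proof -
  define h where "h = inner (w - p) n"
  have "r > 0" using w zero_le_dist[of x0 w] by linarith
  have "\<bar>h\<bar> \<le> dist p w"
    using Cauchy_Schwarz_ineq2[of "w - p" n] n(1) by (simp add: h_def dist_norm norm_minus_commute)
  then have "\<bar>h\<bar> \<le> 3/2 * r" using dist_triangle[of p w x0] pq w by (simp add: dist_commute)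
  moreover have "dist p q \<le> 2 * r" using dist_triangle[of p q x0] pq by (simp add: dist_commute)
  ultimately have "dist p q + 2 * h\<^sup>2 / (3 * r) \<le> sqrt ((dist p q)\<^sup>2 + 4 * h\<^sup>2)"
    by (intro chord_plus_excess_le_sqrt[OF \<open>r > 0\<close> zero_le_dist])
  also have "\<dots> \<le> dist p w + dist q w" unfolding h_def by (rule chord_height_le_dist_sum[OF n])
  finally show ?thesis by (simp add: h_def)
qed

section \<open>Circles about an endpoint of the chord\<close>

definition rot :: "R2 \<Rightarrow> R2" where "rot x = (\<chi> i. if i = 1 then - x$2 else x$1)"

lemma rot_nth [simp]: "rot x $ 1 = - x$2" "rot x $ 2 = x$1"
  by (simp_all add: rot_def)

lemma inner_R2: "inner (x::R2) y = x$1 * y$1 + x$2 * y$2"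
  by (simp add: inner_vec_def sum_2)

lemma inner_rot_rot [simp]: "inner (rot x) (rot y) = inner x y"
  by (simp add: inner_R2 algebra_simps)

lemma inner_rot_self [simp]: "inner x (rot x) = 0" "inner (rot x) x = 0"
  by (simp_all add: inner_R2 algebra_simps)

lemma norm_rot [simp]: "norm (rot x) = norm x"
  by (metis inner_rot_rot norm_eq_sqrt_inner)

lemma rot_decomposition: "(norm w)\<^sup>2 *\<^sub>R v = inner v w *\<^sub>R w + inner v (rot w) *\<^sub>R rot w"
  by (simp add: vec_eq_iff forall_2 inner_R2 power2_norm_eq_inner algebra_simps)

lemma inner_sq_add_inner_rot_sq: "(inner v w)\<^sup>2 + (inner v (rot w))\<^sup>2 = (norm v)\<^sup>2 * (norm w)\<^sup>2"
  unfolding power2_norm_eq_inner by (simp add: inner_R2 power2_eq_square algebra_simps)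

lemma sphere_chord_line:
  fixes x0 p q z :: R2
  assumes "p \<in> sphere x0 r" "q \<in> sphere x0 r" "p \<noteq> q" "z \<in> sphere x0 r"
    and "inner (z - p) (rot (q - p)) = 0"
  shows "z = p \<or> z = q"
proof -
  define Q where "Q = (norm (q - p))\<^sup>2"
  define k where "k = inner (z - p) (q - p) / Q"
  have "Q \<noteq> 0" using assms(3) by (simp add: Q_def)
  have "Q *\<^sub>R (z - p) = inner (z - p) (q - p) *\<^sub>R (q - p)"
    using rot_decomposition[of "q - p" "z - p"] assms(5) by (simp add: Q_def)
  then have "(1 / Q) *\<^sub>R (Q *\<^sub>R (z - p)) = k *\<^sub>R (q - p)" by (simp add: k_def)
  then have "z - p = k *\<^sub>R (q - p)" using \<open>Q \<noteq> 0\<close> by simp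
  then have "p + k *\<^sub>R (q - p) = z" by (metis add.commute diff_add_cancel)
  then have "p + k *\<^sub>R (q - p) \<in> sphere x0 r" using assms(4) by simp
  then have "k = 0 \<or> k = 1" using sphere_secant_param assms(1-3) by blast
  then show ?thesis using \<open>z - p = k *\<^sub>R (q - p)\<close> by auto
qed

text \<open>For cos \<theta> = t / (2 r) the points p + t (cos \<theta> v \<plusminus> sin \<theta> rot v) are where the
  circle of radius t about p meets the sphere; the product of their signed heights over the
  chord pq is negative.\<close>
lemma chord_sides_opposite:
  fixes x0 p q v :: R2
  assumes p: "p \<in> sphere x0 r" and q: "q \<in> sphere x0 r" and v: "v = (1 / r) *\<^sub>R (x0 - p)"
    and t: "0 < t" "t < dist p q" and \<theta>: "cos \<theta> = t / (2 * r)"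
  shows "inner (cos \<theta> *\<^sub>R v + sin \<theta> *\<^sub>R rot v) (rot (q - p))
       * inner (cos \<theta> *\<^sub>R v - sin \<theta> *\<^sub>R rot v) (rot (q - p)) < 0"
proof -
  define L where "L = dist p q"
  have r: "r > 0" using p q dist_triangle[of p q x0] t by (simp add: dist_commute)
  have nv: "norm v = 1" using p r by (simp add: v dist_norm norm_minus_commute)
  have "q - x0 = (q - p) - (x0 - p)" by simp
  then have "(norm (q - x0))\<^sup>2 = L\<^sup>2 - 2 * inner (q - p) (x0 - p) + (norm (x0 - p))\<^sup>2"
    by (simp only: norm_diff_squared L_def dist_norm norm_minus_commute[of p q])
  then have "2 * inner (x0 - p) (q - p) = L\<^sup>2"
    using p q by (simp add: dist_norm norm_minus_commute inner_commute)
  moreover have "inner (rot v) (rot (q - p)) = inner (x0 - p) (q - p) / r"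
    unfolding v inner_rot_rot inner_scaleR_left by simp
  ultimately have B: "inner (rot v) (rot (q - p)) = L\<^sup>2 / (2 * r)"
    by (metis mult.commute divide_divide_eq_left nonzero_mult_div_cancel_left zero_neq_numeral)
  have A: "(inner v (rot (q - p)))\<^sup>2 = L\<^sup>2 - (L\<^sup>2 / (2 * r))\<^sup>2"
    using inner_sq_add_inner_rot_sq[of v "q - p"] B nv by (simp add: L_def dist_norm norm_minus_commute)
  have "inner (cos \<theta> *\<^sub>R v + sin \<theta> *\<^sub>R rot v) (rot (q - p))
       * inner (cos \<theta> *\<^sub>R v - sin \<theta> *\<^sub>R rot v) (rot (q - p))
     = (cos \<theta>)\<^sup>2 * (inner v (rot (q - p)))\<^sup>2 - (sin \<theta>)\<^sup>2 * (inner (rot v) (rot (q - p)))\<^sup>2"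
    by (simp add: inner_add_left inner_diff_left algebra_simps power2_eq_square)
  also have "\<dots> = (cos \<theta>)\<^sup>2 * L\<^sup>2 - (L\<^sup>2 / (2 * r))\<^sup>2"
    unfolding A B sin_squared_eq by (simp add: algebra_simps)
  also have "\<dots> = (cos \<theta> * L)\<^sup>2 - (L\<^sup>2 / (2 * r))\<^sup>2" by (simp add: power_mult_distrib)
  also have "\<dots> < 0"
  proof -
    have "t * L < L * L" by (rule mult_strict_right_mono) (use t in \<open>auto simp: L_def\<close>)
    then have "cos \<theta> * L < L\<^sup>2 / (2 * r)" using r by (simp add: \<theta> power2_eq_square field_simps)
    moreover have "0 \<le> cos \<theta> * L" using t r by (simp add: \<theta> L_def)
    ultimately show ?thesis by (simp add: power_strict_mono)
  qed
  finally show ?thesis .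
qed

lemma dist_circle_point:
  fixes x0 p v :: R2
  assumes "norm v = 1" "p - x0 = (- r) *\<^sub>R v"
  shows "(dist x0 (p + t *\<^sub>R (cos \<theta> *\<^sub>R v + sin \<theta> *\<^sub>R rot v)))\<^sup>2 = r\<^sup>2 - 2 * t * r * cos \<theta> + t\<^sup>2"
    and "dist p (p + t *\<^sub>R (cos \<theta> *\<^sub>R v + sin \<theta> *\<^sub>R rot v)) = \<bar>t\<bar>"
proof -
  define u where "u = cos \<theta> *\<^sub>R v + sin \<theta> *\<^sub>R rot v"
  have vv: "inner v v = 1" using assms(1) by (simp add: norm_eq_1)
  have "inner u u = (cos \<theta>)\<^sup>2 + (sin \<theta>)\<^sup>2"
    using vv by (simp add: u_def inner_add_left inner_add_right power2_eq_square)
  then have nu: "norm u = 1" by (simp add: norm_eq_1)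
  have "dist x0 (p + t *\<^sub>R u) = norm ((- r) *\<^sub>R v + t *\<^sub>R u)"
    using assms(2) by (metis dist_commute dist_norm diff_add_eq)
  moreover have "inner v u = cos \<theta>" using vv by (simp add: u_def inner_add_right)
  ultimately show "(dist x0 (p + t *\<^sub>R (cos \<theta> *\<^sub>R v + sin \<theta> *\<^sub>R rot v)))\<^sup>2 = r\<^sup>2 - 2 * t * r * cos \<theta> + t\<^sup>2"
    using norm_add_squared[of "(- r) *\<^sub>R v" "t *\<^sub>R u"] assms(1) nu
    by (simp add: u_def[symmetric] power_mult_distrib)
  show "dist p (p + t *\<^sub>R (cos \<theta> *\<^sub>R v + sin \<theta> *\<^sub>R rot v)) = \<bar>t\<bar>"
    using nu by (simp add: u_def[symmetric] dist_norm)
qed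

lemma continuous_image_Ioo:
  fixes \<gamma> :: "real \<Rightarrow> 'a::topological_space"
  assumes "continuous_on UNIV \<gamma>" "a < b"
  shows "connected (\<gamma> ` {a<..<b})" "\<gamma> a \<in> closure (\<gamma> ` {a<..<b})" "\<gamma> b \<in> closure (\<gamma> ` {a<..<b})"
proof -
  show "connected (\<gamma> ` {a<..<b})"
    by (rule connected_continuous_image[OF continuous_on_subset[OF assms(1)]]) auto
  have "\<gamma> ` closure {a<..<b} \<subseteq> closure (\<gamma> ` {a<..<b})"
    by (rule continuous_image_closure_subset[OF assms(1)]) simp
  moreover have "a \<in> closure {a<..<b}" "b \<in> closure {a<..<b}" using assms(2) by simp_all
  ultimately show "\<gamma> a \<in> closure (\<gamma> ` {a<..<b})" "\<gamma> b \<in> closure (\<gamma> ` {a<..<b})" by blast+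
qed

lemma circle_arc_crosses_chord:
  fixes x0 p q :: R2
  assumes p: "p \<in> sphere x0 r" and q: "q \<in> sphere x0 r" and t: "0 < t" "t < dist p q"
  obtains F a b where "connected F" "F \<subseteq> ball x0 r \<inter> sphere p t"
    "a \<in> closure F" "b \<in> closure F" "a \<in> sphere x0 r" "b \<in> sphere x0 r"
    "inner (a - p) (rot (q - p)) > 0" "inner (b - p) (rot (q - p)) < 0"
proof -
  define L where "L = dist p q"
  have "L \<le> 2 * r" using p q dist_triangle[of p q x0] by (simp add: L_def dist_commute)
  then have r: "r > 0" using t by (simp add: L_def)
  define v where "v = (1 / r) *\<^sub>R (x0 - p)"
  have v: "norm v = 1" "p - x0 = (- r) *\<^sub>R v"
    using p r by (auto simp: v_def dist_norm norm_minus_commute)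
  define c where "c = t / (2 * r)"
  have c: "0 < c" "c < 1" "t = 2 * r * c"
    using t r \<open>L \<le> 2 * r\<close> by (auto simp: c_def L_def field_simps)
  define \<alpha> where "\<alpha> = arccos c"
  have \<alpha>: "0 < \<alpha>" "\<alpha> < pi" "cos \<alpha> = c"
    using c arccos_lt_bounded[of c] by (auto simp: \<alpha>_def)
  define \<gamma> where "\<gamma> \<theta> = p + t *\<^sub>R (cos \<theta> *\<^sub>R v + sin \<theta> *\<^sub>R rot v)" for \<theta>
  have dist_\<gamma>: "(dist x0 (\<gamma> \<theta>))\<^sup>2 = r\<^sup>2 - 2 * t * r * cos \<theta> + t\<^sup>2" "dist p (\<gamma> \<theta>) = t" for \<theta>
    using dist_circle_point[OF v, of t \<theta>] t by (simp_all add: \<gamma>_def)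
  have inside: "\<gamma> \<theta> \<in> ball x0 r" if "- \<alpha> < \<theta>" "\<theta> < \<alpha>" for \<theta>
  proof -
    have "c < cos \<theta>" using cos_monotone_0_pi[of "\<bar>\<theta>\<bar>" \<alpha>] that \<alpha> by simp
    then have "t < 2 * r * cos \<theta>" using mult_strict_left_mono[of c "cos \<theta>" "2 * r"] r c(3) by simp
    then have "t * t < t * (2 * r * cos \<theta>)" using t by simp
    then have "(dist x0 (\<gamma> \<theta>))\<^sup>2 < r\<^sup>2" using dist_\<gamma>(1) by (simp add: power2_eq_square)
    then show ?thesis using r by (simp add: power2_less_imp_less[of _ r])
  qed
  have "(dist x0 (\<gamma> \<theta>))\<^sup>2 = r\<^sup>2" if "cos \<theta> = c" for \<theta>
    using dist_\<gamma>(1)[of \<theta>] that c(3) by (simp add: power2_eq_square algebra_simps)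
  then have ends: "\<gamma> \<alpha> \<in> sphere x0 r" "\<gamma> (- \<alpha>) \<in> sphere x0 r"
    using \<alpha>(3) r by simp_all
  define F where "F = \<gamma> ` {- \<alpha><..<\<alpha>}"
  have "continuous_on UNIV \<gamma>" unfolding \<gamma>_def by (intro continuous_intros)
  then have "connected F" "\<gamma> (- \<alpha>) \<in> closure F" "\<gamma> \<alpha> \<in> closure F"
    using continuous_image_Ioo[of \<gamma> "- \<alpha>" \<alpha>] \<alpha>(1) by (simp_all add: F_def)
  moreover have "F \<subseteq> ball x0 r \<inter> sphere p t" using inside dist_\<gamma>(2) by (auto simp: F_def)
  moreover have "\<gamma> \<alpha> - p = t *\<^sub>R (cos \<alpha> *\<^sub>R v + sin \<alpha> *\<^sub>R rot v)"
    "\<gamma> (- \<alpha>) - p = t *\<^sub>R (cos \<alpha> *\<^sub>R v - sin \<alpha> *\<^sub>R rot v)" by (simp_all add: \<gamma>_def)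
  then have "inner (\<gamma> \<alpha> - p) (rot (q - p)) * inner (\<gamma> (- \<alpha>) - p) (rot (q - p)) < 0"
    using chord_sides_opposite[OF p q v_def t, of \<alpha>] \<alpha>(3) t
    by (simp add: c_def mult_pos_neg power2_eq_square mult_ac)
  ultimately show ?thesis using that ends by (metis mult_less_0_iff)
qed

lemma sphere_cap_avoiding:
  fixes x0 \<nu> p q :: R2
  assumes \<nu>: "norm \<nu> = 1" and r: "r > 0"
  shows "\<exists>z \<in> sphere x0 r - {p, q}. inner (z - x0) \<nu> > r / 2"
proof -
  define P where "P a b = x0 + r *\<^sub>R (a *\<^sub>R \<nu> + b *\<^sub>R rot \<nu>)" for a b
  have \<nu>\<nu>: "inner \<nu> \<nu> = 1" using \<nu> by (simp add: norm_eq_1)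
  have on: "P a b \<in> sphere x0 r" and cap: "inner (P a b - x0) \<nu> > r / 2"
    and tan: "inner (P a b - x0) (rot \<nu>) = r * b" if "a\<^sup>2 + b\<^sup>2 = 1" "a > 1/2" for a b
  proof -
    have "inner (a *\<^sub>R \<nu> + b *\<^sub>R rot \<nu>) (a *\<^sub>R \<nu> + b *\<^sub>R rot \<nu>) = 1"
      using \<nu>\<nu> that(1) by (simp add: inner_add_left inner_add_right power2_eq_square)
    then show "P a b \<in> sphere x0 r" using r by (simp add: P_def dist_norm norm_eq_1)
    show "inner (P a b - x0) \<nu> > r / 2" using \<nu>\<nu> r that(2) by (simp add: P_def inner_add_left)
    show "inner (P a b - x0) (rot \<nu>) = r * b" using \<nu>\<nu> by (simp add: P_def inner_add_left)
  qed
  have "P 1 0 \<noteq> P (3/5) (4/5)" "P 1 0 \<noteq> P (3/5) (- 4/5)" "P (3/5) (4/5) \<noteq> P (3/5) (- 4/5)"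
    using tan[of 1 0] tan[of "3/5" "4/5"] tan[of "3/5" "- 4/5"] r by (auto simp: power2_eq_square)
  then have "P 1 0 \<notin> {p, q} \<or> P (3/5) (4/5) \<notin> {p, q} \<or> P (3/5) (- 4/5) \<notin> {p, q}" by auto
  then show ?thesis
    using on[of 1 0] on[of "3/5" "4/5"] on[of "3/5" "- 4/5"] cap[of 1 0] cap[of "3/5" "4/5"]
      cap[of "3/5" "- 4/5"]
    by (auto simp: power2_eq_square)
qed

lemma separates_components_reach_sphere:
  fixes x0 p q :: R2
  assumes sep: "separates E x0 r" and r: "r > 0"
  obtains C1 C2 z1 z2 where "C1 \<in> components (ball x0 r - E)" "C2 \<in> components (ball x0 r - E)"
    "C1 \<noteq> C2" "z1 \<in> sphere x0 r - {p, q}" "z1 \<in> closure C1" "z2 \<in> sphere x0 r - {p, q}"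
    "z2 \<in> closure C2"
proof -
  obtain \<nu> C1 C2 where \<nu>: "norm \<nu> = 1" and C: "C1 \<in> components (ball x0 r - E)"
    "C2 \<in> components (ball x0 r - E)" "C1 \<noteq> C2"
    and half: "halfdisc x0 r \<nu> (beta E x0 r * r) \<subseteq> C1" "halfdisc x0 r (- \<nu>) (beta E x0 r * r) \<subseteq> C2"
    and \<beta>: "beta E x0 r \<le> 1/2"
    using sep unfolding separates_def by blast
  have cap: "z \<in> closure (halfdisc x0 r \<mu> (beta E x0 r * r))"
    if "z \<in> sphere x0 r" "inner (z - x0) \<mu> > r / 2" for z \<mu>
  proof -
    have "beta E x0 r * r \<le> r / 2" using \<beta> r by (simp add: mult_right_mono[of _ "1/2"])
    then have "inner (z - x0) \<mu> > beta E x0 r * r" using that(2) by linarith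
    then have "z \<in> {y. inner (y - x0) \<mu> > beta E x0 r * r} \<inter> closure (ball x0 r)"
      using that(1) r by auto
    also have "\<dots> \<subseteq> closure ({y. inner (y - x0) \<mu> > beta E x0 r * r} \<inter> ball x0 r)"
      by (rule open_Int_closure_subset) (intro open_Collect_less continuous_intros)
    also have "\<dots> = closure (halfdisc x0 r \<mu> (beta E x0 r * r))"
      by (rule arg_cong[where f = closure]) (auto simp: halfdisc_def)
    finally show ?thesis .
  qed
  obtain z1 where "z1 \<in> sphere x0 r - {p, q}" "inner (z1 - x0) \<nu> > r / 2"
    using sphere_cap_avoiding[OF \<nu> r] by blast
  moreover have "norm (- \<nu>) = 1" using \<nu> by simp
  then obtain z2 where "z2 \<in> sphere x0 r - {p, q}" "inner (z2 - x0) (- \<nu>) > r / 2"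
    using sphere_cap_avoiding[OF _ r] by blast
  ultimately show ?thesis
    using that[OF C] cap closure_mono[OF half(1)] closure_mono[OF half(2)] by blast
qed

lemma sphere_sides_component_at:
  fixes x0 p q :: R2
  assumes E: "closure E \<inter> sphere x0 r = {p, q}" and "p \<noteq> q"
  obtains K1 K2 where
    "\<And>z. z \<in> sphere x0 r \<Longrightarrow> inner (z - p) (rot (q - p)) > 0 \<Longrightarrow>
      component_at (ball x0 r) (ball x0 r - E) z K1"
    "\<And>z. z \<in> sphere x0 r \<Longrightarrow> inner (z - p) (rot (q - p)) < 0 \<Longrightarrow>
      component_at (ball x0 r) (ball x0 r - E) z K2"
proof -
  let ?\<Omega> = "ball x0 r" and ?N = "rot (q - p)"
  have pq: "p \<in> sphere x0 r" "q \<in> sphere x0 r" using E by auto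
  have "0 < dist p q" "dist p q \<le> 2 * r"
    using \<open>p \<noteq> q\<close> pq dist_triangle[of p q x0] by (simp_all add: dist_commute)
  then have "r > 0" by linarith
  then have cl: "closure ?\<Omega> = cball x0 r" by simp
  define m where "m = midpoint p q"
  have m: "m \<in> ?\<Omega>" using dist_decreases_open_segment[of m p q x0] pq \<open>p \<noteq> q\<close> by (auto simp: m_def)
  define T where "T N' = {z \<in> sphere x0 r. inner (z - p) N' > 0}" for N'
  have "\<exists>K. \<forall>z\<in>T N'. component_at ?\<Omega> (?\<Omega> - E) z K" if N': "inner (q - p) N' = 0" for N'
  proof (rule component_at_connected)
    have "inner (z - m) N' = inner (z - p) N'" for z
      using N' by (simp add: m_def midpoint_def inner_diff_left inner_add_left algebra_simps)
    then have "T N' = {z \<in> sphere x0 r. inner (z - m) N' > 0}" by (simp add: T_def)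
    then show "connected (T N')" using connected_sphere_half[OF m] by simp
    show "T N' \<subseteq> closure ?\<Omega>" unfolding cl T_def using sphere_cball by blast
    fix z assume z: "z \<in> T N'"
    then have "z \<in> sphere x0 r" "z \<notin> {p, q}" using N' by (auto simp: T_def)
    then have "z \<in> closure ?\<Omega>" "z \<notin> closure E"
      using cl E sphere_cball[of x0 r] by (blast, auto simp del: mem_sphere)
    then show "\<exists>K. component_at ?\<Omega> (?\<Omega> - E) z K" by (intro component_at_exists) auto
  qed
  note adjacent = this
  obtain K1 where K1: "\<forall>z\<in>T ?N. component_at ?\<Omega> (?\<Omega> - E) z K1" using adjacent[of ?N] by auto
  obtain K2 where K2: "\<forall>z\<in>T (- ?N). component_at ?\<Omega> (?\<Omega> - E) z K2" using adjacent[of "- ?N"] by auto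
  show ?thesis
  proof (rule that)
    show "component_at ?\<Omega> (?\<Omega> - E) z K1" if "z \<in> sphere x0 r" "inner (z - p) ?N > 0" for z
      using K1 that by (simp add: T_def)
    show "component_at ?\<Omega> (?\<Omega> - E) z K2" if "z \<in> sphere x0 r" "inner (z - p) ?N < 0" for z
      using K2 that by (simp add: T_def)
  qed
qed

text \<open>If the circle of radius t about p missed E, the two arcs of the sphere cut off by the
  chord pq would be adjacent to one and the same component, which then would have to be both
  C1 and C2.\<close>
lemma circle_meets_separating_set:
  fixes x0 p q z1 z2 :: R2
  assumes E: "closure E \<inter> sphere x0 r = {p, q}" and "p \<noteq> q"
    and C: "C1 \<in> components (ball x0 r - E)" "C2 \<in> components (ball x0 r - E)" "C1 \<noteq> C2"
    and z: "z1 \<in> sphere x0 r - {p, q}" "z1 \<in> closure C1" "z2 \<in> sphere x0 r - {p, q}" "z2 \<in> closure C2"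
    and t: "0 < t" "t < dist p q"
  shows "\<exists>z\<in>E. dist p z = t"
proof (rule ccontr)
  assume miss: "\<not> (\<exists>z\<in>E. dist p z = t)"
  let ?\<Omega> = "ball x0 r" and ?N = "rot (q - p)"
  have pq: "p \<in> sphere x0 r" "q \<in> sphere x0 r" using E by auto
  obtain K1 K2 where K1: "\<And>z. z \<in> sphere x0 r \<Longrightarrow> inner (z - p) ?N > 0 \<Longrightarrow> component_at ?\<Omega> (?\<Omega> - E) z K1"
    and K2: "\<And>z. z \<in> sphere x0 r \<Longrightarrow> inner (z - p) ?N < 0 \<Longrightarrow> component_at ?\<Omega> (?\<Omega> - E) z K2"
    using sphere_sides_component_at[OF E \<open>p \<noteq> q\<close>] by blast
  obtain F a b where F: "connected F" "F \<subseteq> ball x0 r \<inter> sphere p t" "a \<in> closure F" "b \<in> closure F"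
    and ab: "a \<in> sphere x0 r" "b \<in> sphere x0 r" "inner (a - p) ?N > 0" "inner (b - p) ?N < 0"
    using circle_arc_crosses_chord[OF pq t] by blast
  have "F \<subseteq> ?\<Omega> - E" using F(2) miss by auto
  moreover have "component_at ?\<Omega> (?\<Omega> - E) a K1" "component_at ?\<Omega> (?\<Omega> - E) b K2"
    using K1 K2 ab by auto
  ultimately have "K1 = K2" by (intro component_at_closure_connected[OF Diff_subset F(1) _ F(3,4)])
  have "component_at ?\<Omega> (?\<Omega> - E) z K1" if z: "z \<in> sphere x0 r - {p, q}" for z
  proof -
    have "inner (z - p) ?N \<noteq> 0" using sphere_chord_line[OF pq \<open>p \<noteq> q\<close>, of z] z by auto
    then show ?thesis using K1 K2 \<open>K1 = K2\<close> z by (cases "inner (z - p) ?N > 0") auto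
  qed
  then have "K1 = C1" "K1 = C2" using component_at_eq_component C z by blast+
  then show False using C(3) by simp
qed

lemma separating_set_meets_circles:
  fixes x0 p q :: R2
  assumes "separates E x0 r" "r > 0" "closure E \<inter> sphere x0 r = {p, q}" "p \<noteq> q"
    and "0 < t" "t < dist p q"
  shows "(\<exists>z\<in>E. dist p z = t) \<and> (\<exists>z\<in>E. dist q z = t)"
proof -
  obtain C1 C2 z1 z2 where C: "C1 \<in> components (ball x0 r - E)" "C2 \<in> components (ball x0 r - E)"
    "C1 \<noteq> C2" and z: "z1 \<in> sphere x0 r - {p, q}" "z1 \<in> closure C1"
    "z2 \<in> sphere x0 r - {p, q}" "z2 \<in> closure C2"
    using separates_components_reach_sphere[OF assms(1,2)] by blast
  show ?thesis
    using circle_meets_separating_set[OF assms(3,4) C z assms(5,6)]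
      circle_meets_separating_set[of E x0 r q p, OF _ _ C] z assms(3-6)
    by (auto simp: insert_commute dist_commute)
qed

section \<open>Length gained from a point off the chord\<close>

lemma ennreal_add_le: "ennreal (a + b) \<le> ennreal a + ennreal b"
  by (cases "0 \<le> a"; cases "0 \<le> b") (auto simp: ennreal_neg intro: ennreal_leI)

lemma H1_ge_lower_density:
  fixes E :: "'a::metric_space set"
  assumes ahl: "\<And>x r. x \<in> E \<Longrightarrow> r > 0 \<Longrightarrow> ball x r \<subseteq> ball x0 r0 \<Longrightarrow> ennreal (r / C0) \<le> H1 (E \<inter> ball x r)"
    and "w \<in> E" "dist x0 w + r \<le> r0" "C0 > 0"
  shows "ennreal (r / C0) \<le> H1 (E \<inter> ball w r)"
proof (cases "r > 0")
  case True
  have "ball w r \<subseteq> ball x0 r0"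
  proof
    fix y assume "y \<in> ball w r"
    then show "y \<in> ball x0 r0" using dist_triangle[of x0 y w] assms(3) by simp
  qed
  then show ?thesis using ahl[OF assms(2) True] by simp
qed (use assms(4) in \<open>simp add: ennreal_neg divide_nonpos_pos\<close>)

text \<open>Radii r1, r2 of balls about points p and q at distance L that stay g-separated from
  each other and from a ball of radius M - g about a point w at distances dp, dq from them,
  where M = min ((dp + dq - L) / 2) (r0 / 4): take r1 as small as the ball about w allows;
  M \<le> (dp + dq - L) / 2 then leaves room for r2.\<close>
lemma three_ball_radii:
  fixes L dp dq r0 g :: real
  assumes d: "r0 / 2 < dp" "r0 / 2 < dq" "L \<le> dp + dq" "r0 \<le> L" and g: "0 < g" "g < r0 / 8"
  obtains r1 r2 where "0 \<le> r1" "0 \<le> r2" "r1 + r2 + g = L"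
    "r1 + min ((dp + dq - L) / 2) (r0 / 4) \<le> dp" "r2 + min ((dp + dq - L) / 2) (r0 / 4) \<le> dq"
proof -
  define M where "M = min ((dp + dq - L) / 2) (r0 / 4)"
  define r1 where "r1 = max 0 (L - dq + M - g)"
  have M: "M \<le> (dp + dq - L) / 2" "M \<le> r0 / 4"
    unfolding M_def by (rule min.cobounded1, rule min.cobounded2)
  have r1: "r1 = 0 \<or> r1 = L - dq + M - g" "0 \<le> r1" "L - dq + M - g \<le> r1" by (auto simp: r1_def)
  show ?thesis by (rule that[of r1 "L - g - r1", folded M_def]) (use r1 M d g in auto)
qed

lemma H1_ge_chord_plus_detour_gap:
  fixes E :: "'a::metric_space set" and x0 p q w :: 'a
  assumes r0: "r0 > 0" and C0: "C0 \<ge> 1"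
    and ahl: "\<And>x r. x \<in> E \<Longrightarrow> r > 0 \<Longrightarrow> ball x r \<subseteq> ball x0 r0 \<Longrightarrow> ennreal (r / C0) \<le> H1 (E \<inter> ball x r)"
    and circ: "\<And>t. 0 < t \<Longrightarrow> t < dist p q \<Longrightarrow> (\<exists>z\<in>E. dist p z = t) \<and> (\<exists>z\<in>E. dist q z = t)"
    and pq: "dist x0 p = r0" "dist x0 q = r0" "r0 \<le> dist p q"
    and w: "w \<in> E" "dist x0 w < r0 / 2"
    and g: "0 < g" "g < r0 / 8"
  shows "ennreal (dist p q + min ((dist p w + dist q w - dist p q) / 2) (r0 / 4) / C0)
    \<le> H1 E + ennreal (2 * g)"
proof -
  define L dp dq where "L = dist p q" and "dp = dist p w" and "dq = dist q w"
  define M where "M = min ((dp + dq - L) / 2) (r0 / 4)"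
  define r3 where "r3 = M - g"
  have d: "r0 / 2 < dp" "r0 / 2 < dq" "L \<le> dp + dq" "r0 \<le> L"
    using dist_triangle[of x0 p w] dist_triangle[of x0 q w] dist_triangle[of p q w] pq w(2)
    by (simp_all add: dp_def dq_def L_def dist_commute)
  obtain r1 r2 where "0 \<le> r1" "0 \<le> r2" "r1 + r2 + g = L" "r1 + M \<le> dp" "r2 + M \<le> dq"
    using three_ball_radii[OF d g, folded M_def] by blast
  then have radii: "0 \<le> r1" "0 \<le> r2" "r1 + r2 + g = L" "r1 + r3 + g \<le> dp" "r2 + r3 + g \<le> dq"
    by (simp_all add: r3_def)
  have circ_p: "\<exists>z\<in>E. dist p z = t" and circ_q: "\<exists>z\<in>E. dist q z = t" if "0 < t" "t < L" for t
    using circ that by (auto simp: L_def)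
  have "r1 < L" "r2 < L" using radii g by linarith+
  then have "ennreal r1 \<le> H1 (E \<inter> ball p r1)" "ennreal r2 \<le> H1 (E \<inter> ball q r2)"
    by (auto intro!: H1_ge_radius circ_p circ_q)
  moreover have "ennreal (r3 / C0) \<le> H1 (E \<inter> ball w r3)"
    using w C0 g by (intro H1_ge_lower_density[OF ahl]) (auto simp: r3_def M_def)
  ultimately have "ennreal r1 + ennreal r2 + ennreal (r3 / C0)
      \<le> H1 (E \<inter> ball p r1) + H1 (E \<inter> ball q r2) + H1 (E \<inter> ball w r3)"
    by (intro add_mono)
  also have "\<dots> \<le> H1 E"
    by (rule H1_three_separated_balls[OF g(1)]) (use radii in \<open>simp_all add: L_def dp_def dq_def\<close>)
  finally have H1E: "ennreal r1 + ennreal r2 + ennreal (r3 / C0) \<le> H1 E" .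
  have "g / C0 \<le> g" using C0 g by (simp add: divide_le_eq)
  then have "L + M / C0 \<le> r1 + r2 + (r3 / C0 + 2 * g)"
    using radii(3) by (simp add: r3_def diff_divide_distrib)
  then have "ennreal (L + M / C0) \<le> ennreal (r1 + r2) + ennreal (r3 / C0 + 2 * g)"
    by (rule order_trans[OF ennreal_leI ennreal_add_le])
  also have "\<dots> \<le> ennreal r1 + ennreal r2 + ennreal (r3 / C0) + ennreal (2 * g)"
    unfolding ennreal_plus[OF radii(1,2), symmetric] add.assoc
    by (rule add_left_mono, rule ennreal_add_le)
  also have "\<dots> \<le> H1 E + ennreal (2 * g)"
    by (rule add_right_mono) (fact H1E)
  finally show ?thesis by (simp add: L_def M_def dp_def dq_def)
qed

lemma H1_ge_chord_plus_detour:
  fixes E :: "'a::metric_space set" and x0 p q w :: 'a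
  assumes "r0 > 0" "C0 \<ge> 1"
    and "\<And>x r. x \<in> E \<Longrightarrow> r > 0 \<Longrightarrow> ball x r \<subseteq> ball x0 r0 \<Longrightarrow> ennreal (r / C0) \<le> H1 (E \<inter> ball x r)"
    and "\<And>t. 0 < t \<Longrightarrow> t < dist p q \<Longrightarrow> (\<exists>z\<in>E. dist p z = t) \<and> (\<exists>z\<in>E. dist q z = t)"
    and "dist x0 p = r0" "dist x0 q = r0" "r0 \<le> dist p q" "w \<in> E" "dist x0 w < r0 / 2"
  shows "ennreal (dist p q + min ((dist p w + dist q w - dist p q) / 2) (r0 / 4) / C0) \<le> H1 E"
proof (rule ennreal_le_epsilon)
  fix e :: real assume "0 < e"
  define g where "g = min (e / 2) (r0 / 16)"
  have "0 < g" "g < r0 / 8" "2 * g \<le> e" using \<open>0 < e\<close> \<open>r0 > 0\<close> by (auto simp: g_def)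
  then have "ennreal (dist p q + min ((dist p w + dist q w - dist p q) / 2) (r0 / 4) / C0)
      \<le> H1 E + ennreal (2 * g)"
    by (intro H1_ge_chord_plus_detour_gap[OF assms])
  also have "\<dots> \<le> H1 E + ennreal e" using \<open>2 * g \<le> e\<close> by (intro add_left_mono ennreal_leI)
  finally show "ennreal (dist p q + min ((dist p w + dist q w - dist p q) / 2) (r0 / 4) / C0)
      \<le> H1 E + ennreal e" .
qed

section \<open>Width and beta numbers\<close>

lemma width_bdd_above:
  "bdd_above (insert 0 ((\<lambda>y. infdist y (line_normal x \<nu>)) ` (E \<inter> ball x r)))"
proof (rule bdd_aboveI[of _ "max 0 r"], safe)
  fix y assume "y \<in> E" "y \<in> ball x r"
  have "infdist y (line_normal x \<nu>) \<le> dist y x" by (rule infdist_le) (simp add: line_normal_def)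
  then show "infdist y (line_normal x \<nu>) \<le> max 0 r" using \<open>y \<in> ball x r\<close> by (simp add: dist_commute)
qed simp

lemma width_nonneg: "0 \<le> width E x r \<nu>"
  unfolding width_def by (rule cSup_upper[OF _ width_bdd_above]) simp

lemma width_le_radius:
  assumes "r > 0" shows "width E x r \<nu> \<le> r"
  unfolding width_def
proof (rule cSup_least, safe)
  fix y assume "y \<in> E" "y \<in> ball x r"
  have "infdist y (line_normal x \<nu>) \<le> dist y x" by (rule infdist_le) (simp add: line_normal_def)
  then show "infdist y (line_normal x \<nu>) \<le> r" using \<open>y \<in> ball x r\<close> by (simp add: dist_commute)
qed (use assms in auto)

lemma beta_bounds:
  assumes "r > 0" and \<nu>: "norm \<nu> = 1"
  shows "0 \<le> beta E x r" "beta E x r \<le> 1" "beta E x r * r \<le> width E x r \<nu>"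
proof -
  define I where "I = (INF \<mu> \<in> {\<mu>. norm \<mu> = 1}. width E x r \<mu>)"
  have "bdd_below ((\<lambda>\<mu>. width E x r \<mu>) ` {\<mu>. norm \<mu> = 1})"
    by (intro bdd_belowI[of _ 0]) (auto simp: width_nonneg)
  then have "I \<le> width E x r \<nu>" unfolding I_def by (rule cINF_lower) (simp add: \<nu>)
  moreover have "0 \<le> I" unfolding I_def
    by (rule cINF_greatest) (use \<nu> width_nonneg in auto)
  moreover have "beta E x r = I / r" by (simp add: beta_def I_def)
  ultimately show "0 \<le> beta E x r" "beta E x r \<le> 1" "beta E x r * r \<le> width E x r \<nu>"
    using assms(1) width_le_radius[OF assms(1), of E x \<nu>] by simp_all
qed

lemma exists_point_beyond_width:
  assumes \<nu>: "norm \<nu> = 1" and a: "0 < a" "a < width E x r \<nu>"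
  shows "\<exists>y\<in>E \<inter> ball x r. a < \<bar>inner (y - x) \<nu>\<bar>"
proof -
  define D where "D = insert 0 ((\<lambda>y. infdist y (line_normal x \<nu>)) ` (E \<inter> ball x r))"
  have "bdd_above D" "D \<noteq> {}" "a < Sup D" using width_bdd_above a(2) by (simp_all add: D_def width_def)
  then obtain d where d: "d \<in> D" "a < d" using less_cSup_iff by blast
  then obtain y where y: "y \<in> E \<inter> ball x r" "d = infdist y (line_normal x \<nu>)"
    using a(1) by (auto simp: D_def)
  define f where "f = y - inner (y - x) \<nu> *\<^sub>R \<nu>"
  have "inner \<nu> \<nu> = 1" using \<nu> by (simp add: norm_eq_1)
  then have "inner (f - x) \<nu> = 0" by (simp add: f_def inner_diff_left algebra_simps)
  then have "d \<le> dist y f" unfolding y(2) by (intro infdist_le) (simp add: line_normal_def)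
  also have "dist y f = \<bar>inner (y - x) \<nu>\<bar>" using \<nu> by (simp add: f_def dist_norm)
  finally show ?thesis using d(2) y(1) by force
qed

text \<open>A point of E far from the line through x normal to n, or else x itself, is far from
  the parallel line through p.\<close>
lemma exists_point_far_from_line:
  fixes E :: "R2 set" and x p n :: R2
  assumes x: "x \<in> E" and r: "r > 0" and n: "norm n = 1"
  shows "\<exists>w\<in>E \<inter> ball x r. 9/20 * (beta E x r * r) \<le> \<bar>inner (w - p) n\<bar>"
proof (cases "beta E x r = 0")
  case False
  define a where "a = 9/10 * (beta E x r * r)"
  have "0 < beta E x r * r" using beta_bounds(1)[OF r n, of E x] False r by simp
  then have "0 < a" "a < width E x r n" using beta_bounds(3)[OF r n, of E x] by (simp_all add: a_def)
  then obtain y where y: "y \<in> E \<inter> ball x r" "a < \<bar>inner (y - x) n\<bar>"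
    using exists_point_beyond_width[OF n] by blast
  have "inner (y - x) n = inner (y - p) n - inner (x - p) n" by (simp add: inner_diff_left)
  then have "a / 2 \<le> \<bar>inner (y - p) n\<bar> \<or> a / 2 \<le> \<bar>inner (x - p) n\<bar>" using y(2) by linarith
  then show ?thesis using x r y(1) by (auto simp: a_def)
qed (use x r in auto)

lemma beta_square_bound_arith:
  fixes \<beta> h r C0 L X :: real
  assumes r: "r > 0" and C0: "C0 \<ge> 1" and \<beta>: "0 \<le> \<beta>" "\<beta> \<le> 1" and h: "9/40 * \<beta> * r \<le> h"
    and X: "L + min (h\<^sup>2 / (3 * r)) (r / 4) / C0 \<le> X"
  shows "\<beta>\<^sup>2 \<le> 64 * C0 / r * (X - L)"
proof -
  define M where "M = min (h\<^sup>2 / (3 * r)) (r / 4)"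
  have "M \<le> C0 * (X - L)" using X C0 by (simp add: M_def field_simps)
  have "(\<beta> * r)\<^sup>2 \<le> 64 * M * r"
  proof (cases "h\<^sup>2 / (3 * r) \<le> r / 4")
    case True
    have "\<beta> * r \<le> 40/9 * h" using h by simp
    then have "(\<beta> * r)\<^sup>2 \<le> (40/9 * h)\<^sup>2" using \<beta> r by (intro power_mono) auto
    also have "\<dots> \<le> 64/3 * h\<^sup>2" by (simp add: power2_eq_square)
    also have "\<dots> = 64 * M * r" using True r by (simp add: M_def)
    finally show ?thesis .
  next
    case False
    have "(\<beta> * r)\<^sup>2 \<le> r\<^sup>2" using \<beta> r by (intro power_mono) (auto simp: mult_left_le_one_le)
    also have "\<dots> \<le> 64 * M * r" using False r by (simp add: M_def power2_eq_square)
    finally show ?thesis .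
  qed
  then have "\<beta>\<^sup>2 \<le> 64 * M / r" using r by (simp add: field_simps power2_eq_square)
  also have "\<dots> \<le> 64 * (C0 * (X - L)) / r"
    using \<open>M \<le> C0 * (X - L)\<close> r by (intro divide_right_mono mult_left_mono) auto
  finally show ?thesis by simp
qed

lemma beta_square_bound:
  fixes \<beta> h r C0 L D :: real and H :: ennreal
  assumes r: "r > 0" and C0: "C0 \<ge> 1" and \<beta>: "0 \<le> \<beta>" "\<beta> \<le> 1" and h: "9/40 * \<beta> * r \<le> \<bar>h\<bar>"
    and D: "2 * h\<^sup>2 / (3 * r) \<le> D" and H: "ennreal (L + min (D / 2) (r / 4) / C0) \<le> H"
  shows "H = \<infinity> \<or> \<beta>\<^sup>2 \<le> 64 * C0 / r * (enn2real H - L)"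
proof (cases "H = \<infinity>")
  case False
  then have "H = ennreal (enn2real H)" by (simp add: less_top)
  then have "L + min (D / 2) (r / 4) / C0 \<le> enn2real H" using H by (metis enn2real_nonneg ennreal_le_iff)
  moreover have "min (\<bar>h\<bar>\<^sup>2 / (3 * r)) (r / 4) / C0 \<le> min (D / 2) (r / 4) / C0"
    using D C0 by (intro divide_right_mono) auto
  ultimately show ?thesis using beta_square_bound_arith[OF r C0 \<beta> h] by simp
qed simp

theorem lemma4p30:
  fixes x0 p q :: R2 and r0 C0 :: real and E :: "R2 set"
  assumes "r0 > 0"
    and "closedin (top_of_set (ball x0 r0)) E"
    and "x0 \<in> E"
    and "separates E x0 r0"
    and "C0 \<ge> 1"
    and "\<And>x r. x \<in> E \<Longrightarrow> r > 0 \<Longrightarrow> ball x r \<subseteq> ball x0 r0 \<Longrightarrow>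
            H1 (E \<inter> ball x r) \<ge> ennreal (r / C0)"
    and "closure E \<inter> sphere x0 r0 = {p, q}" and "p \<noteq> q"
    and "dist p q \<ge> r0"
  shows "H1 E = \<infinity> \<or>
         (beta E x0 (r0/2))\<^sup>2 \<le> 64 * C0 / r0 * (enn2real (H1 E) - dist p q)"
proof -
  have circ: "\<And>t. 0 < t \<Longrightarrow> t < dist p q \<Longrightarrow> (\<exists>z\<in>E. dist p z = t) \<and> (\<exists>z\<in>E. dist q z = t)"
    using separating_set_meets_circles[OF assms(4,1,7,8)] by blast
  have pq: "dist x0 p = r0" "dist x0 q = r0" using assms(7) by auto
  define n where "n = (1 / dist p q) *\<^sub>R rot (q - p)"
  have n: "norm n = 1" "inner (q - p) n = 0"
    using assms(8) by (auto simp: n_def dist_norm norm_minus_commute)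
  obtain w where w: "w \<in> E" "dist x0 w < r0 / 2"
    and far: "9/20 * (beta E x0 (r0/2) * (r0/2)) \<le> \<bar>inner (w - p) n\<bar>"
    using exists_point_far_from_line[OF assms(3) _ n(1), of "r0/2" p] assms(1) by auto
  have "2 * (inner (w - p) n)\<^sup>2 / (3 * r0) \<le> dist p w + dist q w - dist p q"
    using chord_plus_height_sq_le_dist_sum[OF pq w(2) n] by simp
  moreover have "ennreal (dist p q + min ((dist p w + dist q w - dist p q) / 2) (r0 / 4) / C0) \<le> H1 E"
    by (rule H1_ge_chord_plus_detour[OF assms(1,5,6) circ pq assms(9) w])
  ultimately show ?thesis
    using beta_square_bound[OF assms(1,5) beta_bounds(1,2)[of "r0/2" n E x0],
        where h = "inner (w - p) n" and D = "dist p w + dist q w - dist p q"] far assms(1) n(1)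
    by simp
qed

end
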